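(* Let $\mathbf G=(G,\le,\cdot,/,0,1)$ be a left-residuated po-groupoid with commutative multiplication whose underlying poset is a lattice. Then: (i) if $\mathbf G$ satisfies the contraposition law $x/y=\neg y/\neg x$, it satisfies $\neg\neg x=x$; (ii) if $\mathbf G$ satisfies the skew divisibility law $(\neg y/\neg x)\cdot y=x\wedge y$, it satisfies $\neg\neg x=x$; (iii) $\mathbf G$ satisfies the skew divisibility law $(\neg y/\neg x)\cdot y=x\wedge y$ (for all $x,y$) if and only if it satisfies both the divisibility law $(x/y)\cdot y=x\wedge y$ and the contraposition law $x/y=\neg y/\neg x$ (for all $x,y$).
   Context: A (bounded integral) left-residuated po-groupoid is a structure $\mathbf G=(G,\le,\cdot,/,0,1)$ where $(G,\le,0,1)$ is a bounded poset with least element $0$ and greatest element $1$, $\cdot$ is a binary operation on $G$ with $1\cdot x=x\cdot 1=x$ for all $x$, and $/$ is a binary operation on $G$ satisfying the left residuation law: for all $x,y,z\in G$, $x\cdot y\le z\iff x\le z/y$. The negation is $\neg x:=0/x$; $\wedge$ denotes the lattice meet. *)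

theory Defs
  imports Main
begin

text \<open>A bounded integral left-residuated po-groupoid whose underlying poset is a
lattice: the carrier is a type of class bounded_lattice (0 = bot, 1 = top),
with multiplication m and left division r (r z y stands for z / y).\<close>

definition left_res_groupoid :: "('a::bounded_lattice \<Rightarrow> 'a \<Rightarrow> 'a) \<Rightarrow> ('a \<Rightarrow> 'a \<Rightarrow> 'a) \<Rightarrow> bool" where
  "left_res_groupoid m r \<longleftrightarrow>
     (\<forall>x. m top x = x \<and> m x top = x) \<and>
     (\<forall>x y z. m x y \<le> z \<longleftrightarrow> x \<le> r z y)"

definition neg :: "('a::bounded_lattice \<Rightarrow> 'a \<Rightarrow> 'a) \<Rightarrow> 'a \<Rightarrow> 'a" where
  "neg r x = r bot x"

end

theory Submission
  imports Defs
begin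

text \<open>Substituting \<open>y = 1\<close> into either law collapses it to \<open>\<not>\<not>x = x\<close>, because
  \<open>x / 1 = x\<close> and \<open>\<not>1 = 0\<close>. Given double negation, the skew divisibility law yields
  \<open>\<not>y / \<not>x \<le> x / y\<close> by residuation; applied to \<open>\<not>y, \<not>x\<close> this gives the reverse
  inequality, hence contraposition, and then skew divisibility and divisibility coincide.\<close>

lemma left_res_groupoid_residuation:
  "left_res_groupoid m r \<Longrightarrow> m x y \<le> z \<longleftrightarrow> x \<le> r z y"
  by (simp add: left_res_groupoid_def)

lemma left_res_groupoid_mult_top_right:
  "left_res_groupoid m r \<Longrightarrow> m x top = x"
  by (simp add: left_res_groupoid_def)

lemma left_res_groupoid_div_top:
  assumes "left_res_groupoid m r"
  shows "r x top = x"
proof (rule order.antisym)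
  have "m (r x top) top \<le> x"
    using left_res_groupoid_residuation [OF assms] by blast
  then show "r x top \<le> x"
    by (simp add: left_res_groupoid_mult_top_right [OF assms])
  show "x \<le> r x top"
    using left_res_groupoid_residuation [OF assms, of x top x]
    by (simp add: left_res_groupoid_mult_top_right [OF assms])
qed

lemma left_res_groupoid_neg_top:
  "left_res_groupoid m r \<Longrightarrow> neg r top = bot"
  by (simp add: neg_def left_res_groupoid_div_top)

lemma contraposition_imp_double_neg:
  assumes G: "left_res_groupoid m r"
    and contra: "\<And>x y. r x y = r (neg r y) (neg r x)"
  shows "neg r (neg r x) = x"
proof -
  have "x = r (neg r top) (neg r x)"
    using contra [of x top] by (simp add: left_res_groupoid_div_top [OF G])
  then show ?thesis
    by (simp add: left_res_groupoid_neg_top [OF G]) (simp add: neg_def)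
qed

lemma skew_divisibility_imp_double_neg:
  assumes G: "left_res_groupoid m r"
    and skew: "\<And>x y. m (r (neg r y) (neg r x)) y = inf x y"
  shows "neg r (neg r x) = x"
proof -
  have "m (r (neg r top) (neg r x)) top = x"
    using skew [where x = x and y = top] by simp
  then show ?thesis
    by (simp add: left_res_groupoid_neg_top [OF G] left_res_groupoid_mult_top_right [OF G])
      (simp add: neg_def)
qed

lemma skew_divisibility_imp_contraposition:
  assumes G: "left_res_groupoid m r"
    and skew: "\<And>x y. m (r (neg r y) (neg r x)) y = inf x y"
  shows "r x y = r (neg r y) (neg r x)"
proof -
  have le: "r (neg r b) (neg r a) \<le> r a b" for a b
    using skew [where x = a and y = b] left_res_groupoid_residuation [OF G] by (metis inf_le1)
  have nn: "neg r (neg r a) = a" for a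
    using skew_divisibility_imp_double_neg [OF G skew] .
  show ?thesis
    using le [where a = x and b = y] le [where a = "neg r y" and b = "neg r x"]
    by (simp add: nn order.antisym)
qed

theorem mainTheorem11:
  fixes m r :: "'a::bounded_lattice \<Rightarrow> 'a \<Rightarrow> 'a"
  assumes G: "left_res_groupoid m r"
    and comm: "\<And>x y. m x y = m y x"
  shows "((\<forall>x y. r x y = r (neg r y) (neg r x)) \<longrightarrow> (\<forall>x. neg r (neg r x) = x))
       \<and> ((\<forall>x y. m (r (neg r y) (neg r x)) y = inf x y) \<longrightarrow> (\<forall>x. neg r (neg r x) = x))
       \<and> ((\<forall>x y. m (r (neg r y) (neg r x)) y = inf x y) \<longleftrightarrow>
            ((\<forall>x y. m (r x y) y = inf x y) \<and> (\<forall>x y. r x y = r (neg r y) (neg r x))))"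
proof (intro conjI impI iffI)
  show "\<forall>x. neg r (neg r x) = x" if "\<forall>x y. r x y = r (neg r y) (neg r x)"
    using contraposition_imp_double_neg [OF G] that by blast
  show "\<forall>x. neg r (neg r x) = x" if "\<forall>x y. m (r (neg r y) (neg r x)) y = inf x y"
    using skew_divisibility_imp_double_neg [OF G] that by blast
next
  assume skew: "\<forall>x y. m (r (neg r y) (neg r x)) y = inf x y"
  then have contra: "\<forall>x y. r x y = r (neg r y) (neg r x)"
    using skew_divisibility_imp_contraposition [OF G] by blast
  show "\<forall>x y. r x y = r (neg r y) (neg r x)"
    by (fact contra)
  show "\<forall>x y. m (r x y) y = inf x y"
    using skew contra by metis
next
  assume "(\<forall>x y. m (r x y) y = inf x y) \<and> (\<forall>x y. r x y = r (neg r y) (neg r x))"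
  then show "\<forall>x y. m (r (neg r y) (neg r x)) y = inf x y"
    by metis
qed

end
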